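(* Let $d\geq 0$ and $0<i\leq d+1$ be integers, and write $d+1=qi+r$ with integers $q\geq 0$, $1\leq r\leq i$. Let $\Delta\in\mathcal{C}(i,d)$. Then $f_0(\Delta)\geq f_0(S(i,d))=q(i+1)+r+1$.
   Context: All simplicial complexes are finite abstract simplicial complexes; $f_j(\Delta)$ denotes the number of $j$-dimensional faces of $\Delta$. A set $F$ of vertices is a missing face of $\Delta$ if $F\notin\Delta$ but every proper subset of $F$ is in $\Delta$; its dimension is $|F|-1$. $\mathcal{C}(i,d)$ denotes the family of $d$-dimensional simplicial complexes $\Delta$ with $\tilde H_d(\Delta;\mathbb{Z})\neq 0$ (reduced homology) and with no missing faces of dimension $>i$. For integers $d\geq 0$, $i>0$ with $d+1=qi+r$ ($q\geq 0$, $1\leq r\leq i$), $S(i,d)$ is the simplicial join of $q$ copies of $\partial\sigma^i$ and one copy of $\partial\sigma^r$ on pairwise disjoint vertex sets, where $\partial\sigma^k$ is the boundary complex of the $k$-simplex. *)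

theory Defs
  imports Main
begin

text \<open>Finite abstract simplicial complexes: a finite nonempty family of finite sets
  closed under taking subsets (so the empty face belongs to every complex).\<close>
definition simplicial_complex :: "'a set set \<Rightarrow> bool" where
  "simplicial_complex \<Delta> \<longleftrightarrow> finite \<Delta> \<and> \<Delta> \<noteq> {} \<and> (\<forall>F\<in>\<Delta>. finite F)
     \<and> (\<forall>F\<in>\<Delta>. \<forall>G. G \<subseteq> F \<longrightarrow> G \<in> \<Delta>)"

definition vertices :: "'a set set \<Rightarrow> 'a set" where
  "vertices \<Delta> = \<Union>\<Delta>"

definition has_dim :: "'a set set \<Rightarrow> nat \<Rightarrow> bool" where
  "has_dim \<Delta> d \<longleftrightarrow> (\<exists>F\<in>\<Delta>. card F = d + 1) \<and> (\<forall>F\<in>\<Delta>. card F \<le> d + 1)"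

definition fvec :: "nat \<Rightarrow> 'a set set \<Rightarrow> nat" where
  "fvec j \<Delta> = card {F\<in>\<Delta>. card F = j + 1}"

definition missing_face :: "'a set set \<Rightarrow> 'a set \<Rightarrow> bool" where
  "missing_face \<Delta> F \<longleftrightarrow> F \<subseteq> vertices \<Delta> \<and> F \<notin> \<Delta> \<and> (\<forall>G. G \<subset> F \<longrightarrow> G \<in> \<Delta>)"

text \<open>Augmented (reduced) simplicial chain complex with integer coefficients.
  A chain of faces with n elements (dimension n-1; n = 0 is the empty face, giving
  the augmentation) is an integer function supported on such faces. Orientation is
  induced by the linear order on vertices.\<close>
definition chains :: "'a set set \<Rightarrow> nat \<Rightarrow> ('a set \<Rightarrow> int) set" where
  "chains \<Delta> n = {c. \<forall>F. c F \<noteq> 0 \<longrightarrow> F \<in> \<Delta> \<and> card F = n}"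

definition bd :: "('a::linorder) set set \<Rightarrow> ('a set \<Rightarrow> int) \<Rightarrow> 'a set \<Rightarrow> int" where
  "bd \<Delta> c G = (\<Sum>v\<in>vertices \<Delta> - G. (-1) ^ card {x\<in>G. x < v} * c (insert v G))"

definition reduced_homology_nonzero :: "('a::linorder) set set \<Rightarrow> nat \<Rightarrow> bool" where
  "reduced_homology_nonzero \<Delta> d \<longleftrightarrow>
     (\<exists>c\<in>chains \<Delta> (d + 1). bd \<Delta> c = (\<lambda>_. 0) \<and> \<not> (\<exists>b\<in>chains \<Delta> (d + 2). bd \<Delta> b = c))"

definition class_C :: "nat \<Rightarrow> nat \<Rightarrow> ('a::linorder) set set \<Rightarrow> bool" where
  "class_C i d \<Delta> \<longleftrightarrow> simplicial_complex \<Delta> \<and> has_dim \<Delta> d \<and> reduced_homology_nonzero \<Delta> d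
     \<and> (\<forall>F. missing_face \<Delta> F \<longrightarrow> card F \<le> i + 1)"

text \<open>S(i,d): with d+1 = q*i + r, 1 \<le> r \<le> i (so q = d div i, r = d mod i + 1),
  the join of q copies of the boundary of the i-simplex (vertex blocks
  {j} \<times> {0..i}, j < q) and the boundary of the r-simplex (block {q} \<times> {0..r}).
  A face of the join is a union of a face of each factor.\<close>
definition S_block :: "nat \<Rightarrow> nat \<Rightarrow> nat \<Rightarrow> (nat \<times> nat) set" where
  "S_block i d j = (if j < d div i then {j} \<times> {0..i} else {d div i} \<times> {0..d mod i + 1})"

definition S_complex :: "nat \<Rightarrow> nat \<Rightarrow> (nat \<times> nat) set set" where
  "S_complex i d = {F. F \<subseteq> (\<Union>j\<le>d div i. S_block i d j)
      \<and> (\<forall>j\<le>d div i. F \<inter> S_block i d j \<subset> S_block i d j)}"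

end

theory Submission
  imports Defs
begin

(* A nonzero d-cycle c of Delta is supported on a nonempty family S of (d+1)-element
   faces in which the ridge F - {x} of every member F lies in a second member of S
   ("ridge closed"); otherwise the boundary of c would be nonzero on that ridge.
   The bound then follows from a purely combinatorial statement (vertex_bound),
   proved by strong induction on the face size n: if the faces of a finite
   down-closed family Delta have at most n elements, its missing faces at most i + 1
   elements, and Delta contains a ridge-closed family S of n-sets, then Delta has at
   least n + 1 + (n - 1) div i vertices. For the induction step one finds a missing
   face sigma + y with sigma a nonempty subset of a member of S and y outside that
   member (missing_face_at_member). The link of sigma avoids the k + 1 vertices of
   sigma + y, where k = card sigma <= i, and it satisfies all hypotheses with n - k
   in place of n. *)

definition down_closed :: "'a set set \<Rightarrow> bool" where
  "down_closed \<Delta> \<longleftrightarrow> (\<forall>F\<in>\<Delta>. \<forall>G. G \<subseteq> F \<longrightarrow> G \<in> \<Delta>)"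

lemma down_closedD: "down_closed \<Delta> \<Longrightarrow> F \<in> \<Delta> \<Longrightarrow> G \<subseteq> F \<Longrightarrow> G \<in> \<Delta>"
  unfolding down_closed_def by blast

definition nonfaces_bounded :: "'a set set \<Rightarrow> nat \<Rightarrow> bool" where
  "nonfaces_bounded \<Delta> m \<longleftrightarrow> (\<forall>H. missing_face \<Delta> H \<longrightarrow> card H \<le> m)"

text \<open>Every ridge of a member of S lies in another member of S; this is the
  combinatorial shadow of being the support of a cycle.\<close>
definition ridge_closed :: "'a set set \<Rightarrow> bool" where
  "ridge_closed S \<longleftrightarrow> (\<forall>F\<in>S. \<forall>x\<in>F. \<exists>F'\<in>S. F' \<noteq> F \<and> F - {x} \<subseteq> F')"

definition link :: "'a set set \<Rightarrow> 'a set \<Rightarrow> 'a set set" where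
  "link \<Delta> \<sigma> = {G. G \<inter> \<sigma> = {} \<and> G \<union> \<sigma> \<in> \<Delta>}"

lemma exists_missing_face:
  assumes "finite X" "X \<subseteq> vertices \<Delta>" "X \<notin> \<Delta>"
  shows "\<exists>M\<subseteq>X. missing_face \<Delta> M"
  using assms
proof (induction X rule: finite_psubset_induct)
  case (psubset A)
  show ?case
  proof (cases "\<forall>G. G \<subset> A \<longrightarrow> G \<in> \<Delta>")
    case True
    then have "missing_face \<Delta> A" using psubset.prems unfolding missing_face_def by blast
    then show ?thesis by blast
  next
    case False
    then obtain G where G: "G \<subset> A" "G \<notin> \<Delta>" by blast
    then have "G \<subseteq> vertices \<Delta>" using psubset.prems(1) by blast
    then obtain M where "M \<subseteq> G" "missing_face \<Delta> M" using psubset.IH[OF G(1)] G(2) by blast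
    then show ?thesis using G(1) by (meson psubset_imp_subset subset_trans)
  qed
qed

lemma link_vertices: "vertices (link \<Delta> \<sigma>) \<subseteq> vertices \<Delta> - \<sigma>"
  unfolding vertices_def link_def by blast

lemma link_mono: "S \<subseteq> \<Delta> \<Longrightarrow> link S \<sigma> \<subseteq> link \<Delta> \<sigma>"
  unfolding link_def by blast

lemma link_down_closed:
  assumes "down_closed \<Delta>"
  shows "down_closed (link \<Delta> \<sigma>)"
  unfolding down_closed_def
proof (intro ballI allI impI)
  fix F G assume "F \<in> link \<Delta> \<sigma>" "G \<subseteq> F"
  moreover have "G \<union> \<sigma> \<subseteq> F \<union> \<sigma>" using \<open>G \<subseteq> F\<close> by blast
  ultimately show "G \<in> link \<Delta> \<sigma>"
    using down_closedD[OF assms] unfolding link_def by blast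
qed

lemma card_link_face:
  assumes "finite (vertices \<Delta>)" "G \<in> link \<Delta> \<sigma>"
  shows "card (G \<union> \<sigma>) = card G + card \<sigma>"
proof -
  have "G \<union> \<sigma> \<subseteq> vertices \<Delta>" using assms(2) unfolding link_def vertices_def by blast
  then have "finite G" "finite \<sigma>" using assms(1) finite_subset by blast+
  moreover have "G \<inter> \<sigma> = {}" using assms(2) unfolding link_def by blast
  ultimately show ?thesis by (rule card_Un_disjoint)
qed

lemma link_finite: "finite (vertices \<Delta>) \<Longrightarrow> finite (vertices (link \<Delta> \<sigma>))"
  by (rule finite_subset[OF subset_trans[OF link_vertices Diff_subset]])

lemma link_face_size:
  assumes fin: "finite (vertices \<Delta>)" and size: "\<forall>F\<in>\<Delta>. card F \<le> n"
  shows "\<forall>G\<in>link \<Delta> \<sigma>. card G \<le> n - card \<sigma>"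
proof
  fix G assume G: "G \<in> link \<Delta> \<sigma>"
  then have "card (G \<union> \<sigma>) \<le> n" using size unfolding link_def by blast
  then show "card G \<le> n - card \<sigma>" using card_link_face[OF fin G] by simp
qed

lemma link_pure:
  assumes fin: "finite (vertices \<Delta>)" and "S \<subseteq> \<Delta>" and pure: "\<forall>F\<in>S. card F = n"
  shows "\<forall>G\<in>link S \<sigma>. card G = n - card \<sigma>"
proof
  fix G assume G: "G \<in> link S \<sigma>"
  then have "card (G \<union> \<sigma>) = n" using pure unfolding link_def by blast
  moreover have "G \<in> link \<Delta> \<sigma>" using G link_mono[OF \<open>S \<subseteq> \<Delta>\<close>] by blast
  ultimately show "card G = n - card \<sigma>" using card_link_face[OF fin] by simp
qed

lemma link_nonempty:
  assumes "F \<in> S" "\<sigma> \<subseteq> F"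
  shows "link S \<sigma> \<noteq> {}"
proof -
  have "F - \<sigma> \<in> link S \<sigma>" using assms Un_absorb2[of \<sigma> F] unfolding link_def by auto
  then show ?thesis by blast
qed

text \<open>Links inherit the bound on missing faces: a missing face H of the link
  extends to a non-face H \<union> sigma, whose missing faces all contain H.\<close>
lemma link_nonfaces_bounded:
  assumes fin: "finite (vertices \<Delta>)" and dc: "down_closed \<Delta>"
    and bnd: "nonfaces_bounded \<Delta> m" and face: "\<sigma> \<in> \<Delta>"
  shows "nonfaces_bounded (link \<Delta> \<sigma>) m"
  unfolding nonfaces_bounded_def
proof (intro allI impI)
  fix H assume "missing_face (link \<Delta> \<sigma>) H"
  then have HV: "H \<subseteq> vertices (link \<Delta> \<sigma>)" and H_non: "H \<notin> link \<Delta> \<sigma>"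
    and H_min: "\<And>G. G \<subset> H \<Longrightarrow> G \<in> link \<Delta> \<sigma>"
    unfolding missing_face_def by blast+
  have "H \<inter> \<sigma> = {}" using HV link_vertices[of \<Delta> \<sigma>] by blast
  then have non_face: "H \<union> \<sigma> \<notin> \<Delta>" using H_non unfolding link_def by blast
  have "\<sigma> \<subseteq> vertices \<Delta>" using face unfolding vertices_def by blast
  then have HV': "H \<union> \<sigma> \<subseteq> vertices \<Delta>" using HV link_vertices[of \<Delta> \<sigma>] by blast
  then obtain M where M: "M \<subseteq> H \<union> \<sigma>" "missing_face \<Delta> M"
    using exists_missing_face[OF finite_subset[OF HV' fin] HV' non_face] by blast
  have M_non: "M \<notin> \<Delta>" using M(2) unfolding missing_face_def by blast
  have "H \<subseteq> M"
  proof
    fix h assume h: "h \<in> H"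
    show "h \<in> M"
    proof (rule ccontr)
      assume "h \<notin> M"
      have "H - {h} \<in> link \<Delta> \<sigma>" using H_min h by blast
      then have "(H - {h}) \<union> \<sigma> \<in> \<Delta>" unfolding link_def by blast
      moreover have "M \<subseteq> (H - {h}) \<union> \<sigma>" using M(1) \<open>h \<notin> M\<close> by blast
      ultimately show False using down_closedD[OF dc] M_non by blast
    qed
  qed
  moreover have "finite M" using finite_subset[OF subset_trans[OF M(1) HV'] fin] .
  ultimately have "card H \<le> card M" by (simp add: card_mono)
  also have "card M \<le> m" using bnd M(2) unfolding nonfaces_bounded_def by blast
  finally show "card H \<le> m" .
qed

text \<open>Links of a ridge-closed family are ridge closed: the ridge of G \<union> sigma
  opposite to a vertex z of G lies in another member, which must contain sigma.\<close>
lemma link_ridge_closed: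
  assumes "ridge_closed S"
  shows "ridge_closed (link S \<sigma>)"
  unfolding ridge_closed_def
proof (intro ballI)
  fix G z assume G: "G \<in> link S \<sigma>" and z: "z \<in> G"
  then have Gs: "G \<inter> \<sigma> = {}" "G \<union> \<sigma> \<in> S" unfolding link_def by auto
  have "z \<in> G \<union> \<sigma>" using z by blast
  then obtain F where F: "F \<in> S" "F \<noteq> G \<union> \<sigma>" "(G \<union> \<sigma>) - {z} \<subseteq> F"
    using assms Gs(2) unfolding ridge_closed_def by blast
  have "\<sigma> \<subseteq> F" using F(3) z Gs(1) by blast
  then have FG: "(F - \<sigma>) \<union> \<sigma> = F" by blast
  then have "F - \<sigma> \<in> link S \<sigma>" using F(1) unfolding link_def by auto
  moreover have "F - \<sigma> \<noteq> G" using F(2) FG by auto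
  moreover have "G - {z} \<subseteq> F - \<sigma>" using F(3) Gs(1) by blast
  ultimately show "\<exists>F'\<in>link S \<sigma>. F' \<noteq> G \<and> G - {z} \<subseteq> F'"
    by (intro bexI[of _ "F - \<sigma>"] conjI)
qed

text \<open>If sigma + y is a non-face, the link of sigma avoids both y and sigma,
  so it has at least card sigma + 1 fewer vertices than the complex.\<close>
lemma link_vertex_count:
  assumes fin: "finite (vertices \<Delta>)" and dc: "down_closed \<Delta>"
    and "\<sigma> \<in> \<Delta>" "y \<in> vertices \<Delta>" "y \<notin> \<sigma>" "insert y \<sigma> \<notin> \<Delta>"
  shows "card (vertices (link \<Delta> \<sigma>)) + card \<sigma> + 1 \<le> card (vertices \<Delta>)"
proof -
  have "y \<notin> vertices (link \<Delta> \<sigma>)"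
  proof
    assume "y \<in> vertices (link \<Delta> \<sigma>)"
    then obtain G where "G \<in> link \<Delta> \<sigma>" "y \<in> G" unfolding vertices_def by blast
    then have "G \<union> \<sigma> \<in> \<Delta>" "insert y \<sigma> \<subseteq> G \<union> \<sigma>" unfolding link_def by auto
    then show False using down_closedD[OF dc] assms(6) by blast
  qed
  then have "vertices (link \<Delta> \<sigma>) \<subseteq> vertices \<Delta> - insert y \<sigma>"
    using link_vertices[of \<Delta> \<sigma>] by blast
  then have "card (vertices (link \<Delta> \<sigma>)) \<le> card (vertices \<Delta> - insert y \<sigma>)"
    using fin by (simp add: card_mono)
  moreover have yV: "insert y \<sigma> \<subseteq> vertices \<Delta>" using assms(3,4) unfolding vertices_def by blast
  moreover have "finite (insert y \<sigma>)" using finite_subset[OF yV fin] .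
  ultimately have "card (vertices (link \<Delta> \<sigma>)) \<le> card (vertices \<Delta>) - card (insert y \<sigma>)"
    by (simp add: card_Diff_subset)
  moreover have "card (insert y \<sigma>) = card \<sigma> + 1"
    using \<open>finite (insert y \<sigma>)\<close> assms(5) by simp
  moreover have "card (insert y \<sigma>) \<le> card (vertices \<Delta>)" using card_mono[OF fin yV] .
  ultimately show ?thesis by linarith
qed

text \<open>The ridge F - {x}
  lies in another member F' = (F - {x}) + y; the non-face F + y contains a
  missing face, which must contain both x and y. Removing y gives sigma.\<close>
lemma missing_face_at_member:
  assumes fin: "finite (vertices \<Delta>)" and dc: "down_closed \<Delta>"
    and size: "\<forall>F\<in>\<Delta>. card F \<le> n"
    and S: "S \<subseteq> \<Delta>" "\<forall>F\<in>S. card F = n" "ridge_closed S"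
    and F: "F \<in> S" "x \<in> F"
  shows "\<exists>\<sigma> y. \<sigma> \<subseteq> F \<and> x \<in> \<sigma> \<and> y \<in> vertices \<Delta> - F \<and> missing_face \<Delta> (insert y \<sigma>)"
proof -
  obtain F' where F': "F' \<in> S" "F' \<noteq> F" "F - {x} \<subseteq> F'"
    using S(3) F unfolding ridge_closed_def by blast
  have FV: "F \<subseteq> vertices \<Delta>" "F' \<subseteq> vertices \<Delta>"
    using S(1) F(1) F'(1) unfolding vertices_def by blast+
  then have fins: "finite F" "finite F'" using fin finite_subset by blast+
  have cards: "card F = n" "card F' = n" using S(2) F(1) F'(1) by blast+
  have "\<not> F' \<subseteq> F" using F'(2) card_subset_eq fins(1) cards by metis
  then obtain y where y: "y \<in> F'" "y \<notin> F" by blast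
  have "insert y (F - {x}) \<subseteq> F'" using y(1) F'(3) by blast
  moreover have "card (insert y (F - {x})) = n"
    using y(2) fins(1) cards(1) card_Suc_Diff1[OF fins(1) F(2)] by simp
  ultimately have F'_eq: "F' = insert y (F - {x})" using card_subset_eq[OF fins(2)] cards(2) by metis
  have "card (insert y F) = n + 1" using y(2) fins(1) cards(1) by simp
  then have yF_non: "insert y F \<notin> \<Delta>" using size by fastforce
  have yFV: "insert y F \<subseteq> vertices \<Delta>" using FV y(1) by blast
  obtain M where M: "M \<subseteq> insert y F" "missing_face \<Delta> M"
    using exists_missing_face[OF finite_insert[THEN iffD2, OF fins(1)] yFV yF_non] by blast
  have M_non: "M \<notin> \<Delta>" using M(2) unfolding missing_face_def by blast
  have "y \<in> M"
  proof (rule ccontr)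
    assume "y \<notin> M"
    then have "M \<subseteq> F" using M(1) by blast
    then show False using down_closedD[OF dc] S(1) F(1) M_non by blast
  qed
  moreover have "x \<in> M"
  proof (rule ccontr)
    assume "x \<notin> M"
    then have "M \<subseteq> F'" using M(1) F'_eq by blast
    then show False using down_closedD[OF dc] S(1) F'(1) M_non by blast
  qed
  ultimately have "M - {y} \<subseteq> F" "x \<in> M - {y}" "insert y (M - {y}) = M"
    using M(1) y(2) F(2) by auto
  moreover have "y \<in> vertices \<Delta> - F" using FV y by blast
  ultimately show ?thesis using M(2) by metis
qed

lemma div_step:
  fixes n k i :: nat
  assumes "0 < i" "1 \<le> k" "k \<le> i" "k < n"
  shows "(n - 1) div i \<le> (n - k - 1) div i + 1"
proof -
  have "(n - 1) div i \<le> ((n - k - 1) + i) div i"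
    using assms by (intro div_le_mono) linarith
  also have "\<dots> = (n - k - 1) div i + 1" using assms(1) div_add_self2[of i "n - k - 1"] by simp
  finally show ?thesis .
qed

text \<open>The induction
  passes to the link of the set sigma from missing_face_at_member.\<close>
lemma vertex_bound:
  fixes i n :: nat and \<Delta> S :: "'a set set"
  assumes "0 < i" and "1 \<le> n" and "finite (vertices \<Delta>)" and "down_closed \<Delta>"
    and "\<forall>F\<in>\<Delta>. card F \<le> n" and "nonfaces_bounded \<Delta> (i + 1)"
    and "S \<subseteq> \<Delta>" and "S \<noteq> {}" and "\<forall>F\<in>S. card F = n" and "ridge_closed S"
  shows "n + 1 + (n - 1) div i \<le> card (vertices \<Delta>)"
  using assms(2-)
proof (induction n arbitrary: \<Delta> S rule: less_induct)
  case (less n \<Delta> S)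
  note fin = less.prems(2) and dc = less.prems(3) and size = less.prems(4)
    and bnd = less.prems(5) and S = less.prems(6-9)
  obtain F where F: "F \<in> S" using S(2) by blast
  have F_card: "card F = n" using F S(3) by blast
  have F_fin: "finite F"
    using finite_subset[OF _ fin, of F] F S(1) unfolding vertices_def by blast
  obtain x where x: "x \<in> F" using F_card less.prems(1) by fastforce
  obtain \<sigma> y where \<sigma>: "\<sigma> \<subseteq> F" "x \<in> \<sigma>" and y: "y \<in> vertices \<Delta> - F"
    and missing: "missing_face \<Delta> (insert y \<sigma>)"
    using missing_face_at_member[OF fin dc size S(1) S(3) S(4) F x] by blast
  define k where "k = card \<sigma>"
  have \<sigma>_face: "\<sigma> \<in> \<Delta>" using down_closedD[OF dc] S(1) F \<sigma>(1) by blast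
  have \<sigma>_fin: "finite \<sigma>" using finite_subset[OF \<sigma>(1) F_fin] .
  have "y \<notin> \<sigma>" using y \<sigma>(1) by blast
  have k_le_n: "k \<le> n" using card_mono[OF F_fin \<sigma>(1)] F_card k_def by simp
  have "\<sigma> \<noteq> {}" using \<sigma>(2) by blast
  then have k_pos: "1 \<le> k" using \<sigma>_fin k_def by (simp add: Suc_le_eq card_gt_0_iff)
  have "card (insert y \<sigma>) = k + 1" using \<open>y \<notin> \<sigma>\<close> \<sigma>_fin k_def by simp
  moreover have "card (insert y \<sigma>) \<le> i + 1"
    using bnd missing unfolding nonfaces_bounded_def by blast
  ultimately have k_le_i: "k \<le> i" by simp
  have y_vertex: "y \<in> vertices \<Delta>" using y by blast
  have "insert y \<sigma> \<notin> \<Delta>" using missing unfolding missing_face_def by blast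
  then have count: "card (vertices (link \<Delta> \<sigma>)) + k + 1 \<le> card (vertices \<Delta>)"
    using link_vertex_count[OF fin dc \<sigma>_face y_vertex \<open>y \<notin> \<sigma>\<close>] k_def by simp
  show ?case
  proof (cases "k = n")
    case True
    then have "(n - 1) div i = 0" using k_le_i k_pos by (simp add: div_less)
    then show ?thesis using count True by simp
  next
    case False
    then have k_lt_n: "k < n" using k_le_n by simp
    have "n - k + 1 + (n - k - 1) div i \<le> card (vertices (link \<Delta> \<sigma>))"
      using less.IH[of "n - k" "link \<Delta> \<sigma>" "link S \<sigma>", OF _ _ link_finite[OF fin]
          link_down_closed[OF dc] link_face_size[OF fin size, of \<sigma>, folded k_def]
          link_nonfaces_bounded[OF fin dc bnd \<sigma>_face] link_mono[OF S(1)]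
          link_nonempty[OF F \<sigma>(1)] link_pure[OF fin S(1) S(3), of \<sigma>, folded k_def]
          link_ridge_closed[OF S(4)]] k_pos k_lt_n
      by simp
    then show ?thesis using count div_step[OF assms(1) k_pos k_le_i k_lt_n] by linarith
  qed
qed

text \<open>The support of a cycle is ridge closed: if the ridge F - {x} of a member F
  of the support lay in no other member, the boundary of c at F - {x} would be
  the nonzero number \<plusminus>c F.\<close>
lemma cycle_support_ridge_closed:
  fixes c :: "('a::linorder) set \<Rightarrow> int"
  assumes fin: "finite (vertices \<Delta>)" and supp: "\<forall>F. c F \<noteq> 0 \<longrightarrow> F \<in> \<Delta>"
    and cycle: "bd \<Delta> c = (\<lambda>_. 0)"
  shows "ridge_closed {F. c F \<noteq> 0}"
  unfolding ridge_closed_def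
proof (intro ballI)
  fix F x assume F: "F \<in> {F. c F \<noteq> 0}" and x: "x \<in> F"
  show "\<exists>F'\<in>{F. c F \<noteq> 0}. F' \<noteq> F \<and> F - {x} \<subseteq> F'"
  proof (rule ccontr)
    assume no_other: "\<not> (\<exists>F'\<in>{F. c F \<noteq> 0}. F' \<noteq> F \<and> F - {x} \<subseteq> F')"
    define R where "R = F - {x}"
    have F_R: "insert x R = F" unfolding R_def using x by blast
    have "F \<in> \<Delta>" using supp F by blast
    then have x_V: "x \<in> vertices \<Delta> - R" using x unfolding vertices_def R_def by blast
    have others: "c (insert v R) = 0" if v: "v \<in> vertices \<Delta> - R - {x}" for v
    proof (rule ccontr)
      assume "c (insert v R) \<noteq> 0"
      moreover have "insert v R \<noteq> F" using v x unfolding R_def by blast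
      moreover have "F - {x} \<subseteq> insert v R" unfolding R_def by blast
      ultimately have "\<exists>F'\<in>{F. c F \<noteq> 0}. F' \<noteq> F \<and> F - {x} \<subseteq> F'"
        by (intro bexI[of _ "insert v R"] conjI) simp_all
      with no_other show False by contradiction
    qed
    have "bd \<Delta> c R = (-1) ^ card {y\<in>R. y < x} * c (insert x R)
        + (\<Sum>v\<in>vertices \<Delta> - R - {x}. (-1) ^ card {y\<in>R. y < v} * c (insert v R))"
      unfolding bd_def using fin x_V by (simp add: sum.remove)
    also have "\<dots> = (-1) ^ card {y\<in>R. y < x} * c F" using others F_R by simp
    finally have "bd \<Delta> c R \<noteq> 0" using F by simp
    then show False using cycle by simp
  qed
qed

text \<open>Nonvanishing homology yields a nonzero cycle, since zero is a boundary.\<close>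
lemma nonzero_cycle:
  fixes \<Delta> :: "('a::linorder) set set"
  assumes "reduced_homology_nonzero \<Delta> d"
  obtains c where "c \<in> chains \<Delta> (d + 1)" "bd \<Delta> c = (\<lambda>_. 0)" "c \<noteq> (\<lambda>_. 0)"
proof -
  obtain c where c: "c \<in> chains \<Delta> (d + 1)" "bd \<Delta> c = (\<lambda>_. 0)"
    and not_boundary: "\<not> (\<exists>b\<in>chains \<Delta> (d + 2). bd \<Delta> b = c)"
    using assms unfolding reduced_homology_nonzero_def by blast
  have "(\<lambda>_. 0) \<in> chains \<Delta> (d + 2)" "bd \<Delta> (\<lambda>_. 0) = (\<lambda>_. 0)"
    unfolding chains_def bd_def by simp_all
  then have "c \<noteq> (\<lambda>_. 0)" using not_boundary by metis
  with c that show ?thesis by blast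
qed

lemma fvec0_eq_card_vertices:
  assumes "down_closed \<Delta>"
  shows "fvec 0 \<Delta> = card (vertices \<Delta>)"
proof -
  have "{F\<in>\<Delta>. card F = 0 + 1} = (\<lambda>v. {v}) ` vertices \<Delta>"
  proof
    show "{F\<in>\<Delta>. card F = 0 + 1} \<subseteq> (\<lambda>v. {v}) ` vertices \<Delta>"
      unfolding vertices_def by (auto simp: card_Suc_eq)
    show "(\<lambda>v. {v}) ` vertices \<Delta> \<subseteq> {F\<in>\<Delta>. card F = 0 + 1}"
      using down_closedD[OF assms] unfolding vertices_def by auto
  qed
  then show ?thesis unfolding fvec_def by (simp add: card_image)
qed

lemma div_mod_of_decomposition:
  fixes i d q r :: nat
  assumes "0 < i" "d + 1 = q * i + r" "1 \<le> r" "r \<le> i"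
  shows "d div i = q" "d mod i + 1 = r"
proof -
  have d: "d = (r - 1) + q * i" and small: "r - 1 < i" using assms by simp_all
  have "d div i = q + (r - 1) div i" unfolding d by (rule div_mult_self1) (use assms(1) in simp)
  then show "d div i = q" using small by simp
  have "d mod i = (r - 1) mod i" unfolding d by (rule mod_mult_self1)
  then show "d mod i + 1 = r" using small assms(3) by simp
qed

lemma S_block_two_vertices:
  assumes "0 < i"
  obtains a b where "a \<noteq> b" "a \<in> S_block i d j" "b \<in> S_block i d j"
proof -
  define m where "m = (if j < d div i then j else d div i)"
  have "(m, 0) \<in> S_block i d j" "(m, 1) \<in> S_block i d j"
    using assms unfolding S_block_def m_def by (simp_all split: if_split)
  then show ?thesis by (intro that[of "(m, 0)" "(m, 1)"]) simp_all
qed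

lemma S_complex_vertices:
  assumes "0 < i"
  shows "vertices (S_complex i d) = (\<Union>j\<le>d div i. S_block i d j)"
proof
  show "vertices (S_complex i d) \<subseteq> (\<Union>j\<le>d div i. S_block i d j)"
    unfolding vertices_def S_complex_def by blast
  show "(\<Union>j\<le>d div i. S_block i d j) \<subseteq> vertices (S_complex i d)"
  proof
    fix v assume v: "v \<in> (\<Union>j\<le>d div i. S_block i d j)"
    have "{v} \<inter> S_block i d j \<subset> S_block i d j" for j
    proof -
      obtain a b where "a \<noteq> b" "a \<in> S_block i d j" "b \<in> S_block i d j"
        using S_block_two_vertices[OF assms] .
      then have "\<not> S_block i d j \<subseteq> {v}" by blast
      then show ?thesis by blast
    qed
    then have "{v} \<in> S_complex i d" using v unfolding S_complex_def by blast
    then show "v \<in> vertices (S_complex i d)" unfolding vertices_def by blast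
  qed
qed

lemma S_complex_down_closed: "down_closed (S_complex i d)"
  unfolding down_closed_def S_complex_def by blast

text \<open>S(i,d) has q(i+1) + r + 1 vertices: q blocks of i + 1 and one of r + 1.\<close>
lemma S_complex_vertex_count:
  fixes i d q r :: nat
  assumes "0 < i" "d + 1 = q * i + r" "1 \<le> r" "r \<le> i"
  shows "fvec 0 (S_complex i d) = q * (i + 1) + r + 1"
proof -
  note qr = div_mod_of_decomposition[OF assms]
  have "(\<Union>j\<le>d div i. S_block i d j) = {..<q} \<times> {0..i} \<union> {q} \<times> {0..r}"
    unfolding S_block_def qr by (auto split: if_splits)
  moreover have "card ({..<q} \<times> {0..i} \<union> {q} \<times> {0..r}) = q * (i + 1) + (r + 1)"
    by (subst card_Un_disjoint) (auto simp: card_cartesian_product)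
  ultimately show ?thesis
    using fvec0_eq_card_vertices[OF S_complex_down_closed] S_complex_vertices[OF assms(1)]
    by simp
qed

theorem theorem1p1:
  fixes \<Delta> :: "('a::linorder) set set" and i d q r :: nat
  assumes "0 < i" and "i \<le> d + 1"
    and "d + 1 = q * i + r" and "1 \<le> r" and "r \<le> i"
    and "class_C i d \<Delta>"
  shows "fvec 0 \<Delta> \<ge> fvec 0 (S_complex i d) \<and> fvec 0 (S_complex i d) = q * (i + 1) + r + 1"
proof -
  have sc: "simplicial_complex \<Delta>" and dim: "has_dim \<Delta> d"
    and hom: "reduced_homology_nonzero \<Delta> d" and bnd: "nonfaces_bounded \<Delta> (i + 1)"
    using assms(6) unfolding class_C_def nonfaces_bounded_def by auto
  have fin: "finite (vertices \<Delta>)" and dc: "down_closed \<Delta>"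
    using sc unfolding simplicial_complex_def vertices_def down_closed_def by auto
  have size: "\<forall>F\<in>\<Delta>. card F \<le> d + 1" using dim unfolding has_dim_def by blast
  obtain c where c: "c \<in> chains \<Delta> (d + 1)" "bd \<Delta> c = (\<lambda>_. 0)" "c \<noteq> (\<lambda>_. 0)"
    using nonzero_cycle[OF hom] .
  have supp: "\<forall>F. c F \<noteq> 0 \<longrightarrow> F \<in> \<Delta>" and pure: "\<forall>F\<in>{F. c F \<noteq> 0}. card F = d + 1"
    using c(1) unfolding chains_def by auto
  have "{F. c F \<noteq> 0} \<noteq> {}" using c(3) by auto
  then have "d + 1 + 1 + d div i \<le> card (vertices \<Delta>)"
    using vertex_bound[OF assms(1) _ fin dc size bnd _ _ pure
        cycle_support_ridge_closed[OF fin supp c(2)]] supp by auto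
  moreover have "d div i = q" using div_mod_of_decomposition[OF assms(1,3,4,5)] by simp
  moreover have "fvec 0 (S_complex i d) = q * (i + 1) + r + 1"
    using S_complex_vertex_count[OF assms(1,3,4,5)] .
  ultimately show ?thesis using fvec0_eq_card_vertices[OF dc] assms(3) by simp
qed

end
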